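(* Let $G$ be a symmetric star topology with compute nodes $V_C$, where $w_v$ is the bandwidth of the edges between compute node $v$ and the center. Let $R,S$ be sets with $|R|<|S|$, $N=|R|+|S|$, initially partitioned among the compute nodes, node $v$ holding $R_v\subseteq R$, $S_v\subseteq S$, $N_v=|R_v|+|S_v|$. Let $V_\alpha=\{v\in V_C:\min\{N_v,N-N_v\}<|R|\}$ and $V_\beta=V_C\setminus V_\alpha$. If $\max_vN_v\le N/2$, then any algorithm computing $R\times S$ has (tuple) cost $\Omega(C)$, where \[C=\min\Big\{\frac{|S|}{\max_vw_v},\ \frac{\sum_{u\in V_\alpha}|S_u|}{2\sum_{u\in V_\beta}w_u},\ \mathcal V\big(R,\textstyle\bigcup_{u\in V_\alpha}S_u,V_\alpha\big)\Big\}.\]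
   Context: Topology-aware model: the network is a directed graph; each edge $e$ has bandwidth $w_e>0$; compute nodes store data and compute, other nodes only route. A symmetric star topology has compute nodes each connected to a single central routing node by an edge in each direction with equal bandwidth. The input is partitioned without duplication; the algorithm knows topology, bandwidths and local fragment sizes. Computation proceeds in synchronous rounds; the tuple cost of a round is $\max_e|Y(e)|/w_e$ with $|Y(e)|$ the number of elements routed through edge $e$; total cost is the sum over rounds. Computing $R\times S$ means every pair $(r,s)\in R\times S$ is emitted by at least one compute node holding both $r$ and $s$. For sets $R',S'$ and a set $U$ of compute nodes, $\mathcal V(R',S',U)$ denotes the smallest $C\ge0$ satisfying $\sum_{v\in U}\min\{C\cdot w_v,|R'|\}\cdot C\cdot w_v\ge|R'|\cdot|S'|$. *)

theory Defs
  imports Complex_Main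
begin

text \<open>Symmetric star topology: compute nodes V (a finite nonempty set), each node v
  connected to the central routing node c by an edge (v,c) and an edge (c,v), both of
  bandwidth w v > 0.  Input: relations R and S, node v holds Rv v and Sv v, the
  fragments partitioning R and S without duplication.\<close>

definition star_instance ::
  "'v set \<Rightarrow> ('v \<Rightarrow> real) \<Rightarrow> 'r set \<Rightarrow> 's set \<Rightarrow> ('v \<Rightarrow> 'r set) \<Rightarrow> ('v \<Rightarrow> 's set) \<Rightarrow> bool" where
  "star_instance V w R S Rv Sv \<longleftrightarrow>
     finite V \<and> V \<noteq> {} \<and> (\<forall>v\<in>V. w v > 0) \<and> finite R \<and> finite S \<and>
     R = (\<Union>v\<in>V. Rv v) \<and> S = (\<Union>v\<in>V. Sv v) \<and>
     (\<forall>u\<in>V. \<forall>v\<in>V. u \<noteq> v \<longrightarrow> Rv u \<inter> Rv v = {} \<and> Sv u \<inter> Sv v = {})"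

definition init_data :: "('v \<Rightarrow> 'r set) \<Rightarrow> ('v \<Rightarrow> 's set) \<Rightarrow> 'v \<Rightarrow> ('r + 's) set" where
  "init_data Rv Sv v = Inl ` Rv v \<union> Inr ` Sv v"

text \<open>An execution: in round t node v sends the set of elements M t v u to node u
  (routed along v \<rightarrow> c \<rightarrow> u).  know ... t v is what node v holds after t rounds.\<close>

fun know :: "'v set \<Rightarrow> ('v \<Rightarrow> 'e set) \<Rightarrow> (nat \<Rightarrow> 'v \<Rightarrow> 'v \<Rightarrow> 'e set) \<Rightarrow> nat \<Rightarrow> 'v \<Rightarrow> 'e set" where
  "know V K0 M 0 v = K0 v"
| "know V K0 M (Suc t) v = know V K0 M t v \<union> (\<Union>u\<in>V - {v}. M t u v)"

definition valid_exec :: "'v set \<Rightarrow> ('v \<Rightarrow> 'e set) \<Rightarrow> (nat \<Rightarrow> 'v \<Rightarrow> 'v \<Rightarrow> 'e set) \<Rightarrow> nat \<Rightarrow> bool" where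
  "valid_exec V K0 M T \<longleftrightarrow> (\<forall>t<T. \<forall>v\<in>V. \<forall>u\<in>V. M t v u \<subseteq> know V K0 M t v)"

text \<open>Number of elements routed through edge (v,c) resp. (c,v) in round t.\<close>

definition load_out :: "'v set \<Rightarrow> (nat \<Rightarrow> 'v \<Rightarrow> 'v \<Rightarrow> 'e set) \<Rightarrow> nat \<Rightarrow> 'v \<Rightarrow> nat" where
  "load_out V M t v = (\<Sum>u\<in>V - {v}. card (M t v u))"

definition load_in :: "'v set \<Rightarrow> (nat \<Rightarrow> 'v \<Rightarrow> 'v \<Rightarrow> 'e set) \<Rightarrow> nat \<Rightarrow> 'v \<Rightarrow> nat" where
  "load_in V M t u = (\<Sum>v\<in>V - {u}. card (M t v u))"

definition round_cost :: "'v set \<Rightarrow> ('v \<Rightarrow> real) \<Rightarrow> (nat \<Rightarrow> 'v \<Rightarrow> 'v \<Rightarrow> 'e set) \<Rightarrow> nat \<Rightarrow> real" where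
  "round_cost V w M t =
     Max ((\<lambda>v. real (load_out V M t v) / w v) ` V \<union> (\<lambda>v. real (load_in V M t v) / w v) ` V)"

definition total_cost :: "'v set \<Rightarrow> ('v \<Rightarrow> real) \<Rightarrow> (nat \<Rightarrow> 'v \<Rightarrow> 'v \<Rightarrow> 'e set) \<Rightarrow> nat \<Rightarrow> real" where
  "total_cost V w M T = (\<Sum>t<T. round_cost V w M t)"

definition computes_product ::
  "'v set \<Rightarrow> ('v \<Rightarrow> ('r + 's) set) \<Rightarrow> (nat \<Rightarrow> 'v \<Rightarrow> 'v \<Rightarrow> ('r + 's) set) \<Rightarrow> nat \<Rightarrow> 'r set \<Rightarrow> 's set \<Rightarrow> bool" where
  "computes_product V K0 M T R S \<longleftrightarrow>
     (\<forall>r\<in>R. \<forall>s\<in>S. \<exists>v\<in>V. \<exists>t\<le>T. Inl r \<in> know V K0 M t v \<and> Inr s \<in> know V K0 M t v)"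

definition volV :: "'a set \<Rightarrow> 'b set \<Rightarrow> 'v set \<Rightarrow> ('v \<Rightarrow> real) \<Rightarrow> real" where
  "volV R' S' U w = Inf {C::real. C \<ge> 0 \<and>
      (\<Sum>v\<in>U. min (C * w v) (real (card R')) * C * w v) \<ge> real (card R') * real (card S')}"

text \<open>The lower-bound quantity C of the theorem.  When V_beta is empty the second term
  is +infinity and therefore dropped from the minimum.\<close>

definition star_bound ::
  "'v set \<Rightarrow> ('v \<Rightarrow> real) \<Rightarrow> 'r set \<Rightarrow> 's set \<Rightarrow> ('v \<Rightarrow> 'r set) \<Rightarrow> ('v \<Rightarrow> 's set) \<Rightarrow> real" where
  "star_bound V w R S Rv Sv =
    (let N = card R + card S;
         Nv = (\<lambda>v. card (Rv v) + card (Sv v));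
         Va = {v\<in>V. min (Nv v) (N - Nv v) < card R};
         Vb = V - Va;
         t1 = real (card S) / Max (w ` V);
         t2 = (\<Sum>u\<in>Va. real (card (Sv u))) / (2 * (\<Sum>u\<in>Vb. w u));
         t3 = volV R (\<Union>u\<in>Va. Sv u) Va w
     in if Vb = {} then min t1 t3 else min t1 (min t2 t3))"

end

theory Submission
  imports Defs
begin

text \<open>Let \<open>L\<close> be the total cost.  Over the whole execution a node \<open>x\<close> sends and receives at
  most \<open>L w\<^sub>x\<close> elements.  If a node with \<open>N\<^sub>x < |R|\<close> never sent away one of its own tuples,
  every pair containing that tuple would have to be formed at \<open>x\<close>, so all of \<open>S\<close> (resp. all
  of \<open>R\<close>) would have to reach \<open>x\<close>, which is too much; hence \<open>|R\<^sub>x|, |S\<^sub>x| \<le> L w\<^sub>x\<close> and such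
  a node ends up holding at most \<open>3 L w\<^sub>x\<close> elements.  A pair \<open>(r, s)\<close> with \<open>s\<close> in a fragment of
  \<open>V\<^sub>\<alpha>\<close> is formed either at a node of \<open>V\<^sub>\<alpha>\<close>, which covers at most \<open>9 min(L w\<^sub>x, |R|) L w\<^sub>x\<close>
  pairs, or at a node of \<open>V\<^sub>\<beta>\<close> that received \<open>s\<close>, and these pairs number at most
  \<open>|R| L \<Sum>\<^bsub>V\<^sub>\<beta>\<^esub> w\<close>.  Whichever part covers half of \<open>R \<times> S\<^sub>\<alpha>\<close> gives \<open>C \<le> 18 L\<close>, through the
  \<open>\<V>\<close> term or through the second term of the minimum.\<close>

lemma card_vimage_Inl_plus_Inr:
  assumes "finite A"
  shows "card (Inl -` A) + card (Inr -` A) = card A"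
proof -
  have "A = Inl -` A <+> Inr -` A"
    by (auto simp: Plus_def image_iff) (metis sumE)
  moreover have "finite (Inl -` A)" "finite (Inr -` A)"
    using assms by (auto intro: finite_vimageI)
  ultimately show ?thesis by (metis card_Plus)
qed

lemma card_vimage_inj_le: "inj f \<Longrightarrow> finite A \<Longrightarrow> card (f -` A) \<le> card A"
  using card_vimage_inj_on_le[of f UNIV A] by simp

lemma ex_not_mapped_into:
  assumes "inj f" "finite B" "card B < card A"
  shows "\<exists>a\<in>A. f a \<notin> B"
proof (rule ccontr)
  assume "\<not> ?thesis"
  then have "card A \<le> card (f -` B)"
    using assms(1,2) by (intro card_mono finite_vimageI) auto
  also have "\<dots> \<le> card B"
    using assms(1,2) by (rule card_vimage_inj_le)
  finally show False using assms(3) by simp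
qed

definition received :: "'v set \<Rightarrow> (nat \<Rightarrow> 'v \<Rightarrow> 'v \<Rightarrow> 'e set) \<Rightarrow> nat \<Rightarrow> 'v \<Rightarrow> 'e set" where
  "received V M T x = (\<Union>t<T. \<Union>u\<in>V - {x}. M t u x)"

definition sent :: "'v set \<Rightarrow> (nat \<Rightarrow> 'v \<Rightarrow> 'v \<Rightarrow> 'e set) \<Rightarrow> nat \<Rightarrow> 'v \<Rightarrow> 'e set" where
  "sent V M T x = (\<Union>t<T. \<Union>u\<in>V - {x}. M t x u)"

lemma know_eq_received: "know V K0 M t x = K0 x \<union> received V M t x"
  unfolding received_def by (induction t) (auto simp: lessThan_Suc)

lemma know_mono: "t \<le> t' \<Longrightarrow> know V K0 M t x \<subseteq> know V K0 M t' x"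
  unfolding know_eq_received received_def by auto

lemma sent_subset_know:
  assumes "valid_exec V K0 M T" "x \<in> V"
  shows "sent V M T x \<subseteq> know V K0 M T x"
proof
  fix e assume "e \<in> sent V M T x"
  then obtain t u where "t < T" "u \<in> V" "e \<in> M t x u" unfolding sent_def by auto
  then have "e \<in> know V K0 M t x" using assms unfolding valid_exec_def by blast
  then show "e \<in> know V K0 M T x" using know_mono[of t T V K0 M x] \<open>t < T\<close> by auto
qed

lemma finite_know:
  assumes "valid_exec V K0 M T" "finite V" "\<And>v. v \<in> V \<Longrightarrow> finite (K0 v)" "t \<le> T" "v \<in> V"
  shows "finite (know V K0 M t v)"
  using assms(4,5)
proof (induction t arbitrary: v)
  case (Suc t)
  have "finite (M t u v)" if "u \<in> V" for u
  proof (rule finite_subset)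
    show "M t u v \<subseteq> know V K0 M t u" using assms(1) Suc.prems that unfolding valid_exec_def by simp
    show "finite (know V K0 M t u)" using Suc.IH Suc.prems that by simp
  qed
  then show ?case using Suc assms(2) by simp
qed (use assms(3) in simp)

lemma know_imp_sent:
  assumes "valid_exec V K0 M T" "\<And>z. z \<in> V - {x} \<Longrightarrow> e \<notin> K0 z"
    and "t \<le> T" "y \<in> V" "y \<noteq> x" "e \<in> know V K0 M t y"
  shows "e \<in> sent V M T x"
  using assms(3-6)
proof (induction t arbitrary: y)
  case 0
  then show ?case using assms(2) by simp
next
  case (Suc t)
  show ?case
  proof (cases "e \<in> know V K0 M t y")
    case True
    then show ?thesis using Suc by simp
  next
    case False
    then obtain u where u: "u \<in> V - {y}" "e \<in> M t u y" using Suc.prems by auto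
    show ?thesis
    proof (cases "u = x")
      case True
      then show ?thesis using u Suc.prems unfolding sent_def by auto
    next
      case False
      have "M t u y \<subseteq> know V K0 M t u" using assms(1) u Suc.prems unfolding valid_exec_def by simp
      then have "e \<in> know V K0 M t u" using u by blast
      then show ?thesis using Suc.IH[of u] False u Suc.prems by simp
    qed
  qed
qed

lemma card_init_data_le: "card (init_data Rv Sv x) \<le> card (Rv x) + card (Sv x)"
  unfolding init_data_def by (rule card_Un_le[THEN order_trans]) (simp add: card_image)

lemma load_le_round_cost:
  assumes "finite V" "x \<in> V" "w x > 0"
  shows "real (load_in V M t x) \<le> round_cost V w M t * w x"
    and "real (load_out V M t x) \<le> round_cost V w M t * w x"
proof -
  have "real (load_in V M t x) / w x \<le> round_cost V w M t"
    and "real (load_out V M t x) / w x \<le> round_cost V w M t"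
    unfolding round_cost_def using assms by (auto intro: Max_ge)
  then show "real (load_in V M t x) \<le> round_cost V w M t * w x"
    and "real (load_out V M t x) \<le> round_cost V w M t * w x"
    using assms(3) by (simp_all add: pos_divide_le_eq)
qed

lemma card_rounds_le_total_cost:
  assumes "finite V" "\<And>t. real (\<Sum>u\<in>V - {x}. card (F t u)) \<le> round_cost V w M t * w x"
  shows "real (card (\<Union>t<T. \<Union>u\<in>V - {x}. F t u)) \<le> total_cost V w M T * w x"
proof -
  have "card (\<Union>t<T. \<Union>u\<in>V - {x}. F t u) \<le> (\<Sum>t<T. \<Sum>u\<in>V - {x}. card (F t u))"
    using assms(1) by (intro card_UN_le[THEN order_trans] sum_mono card_UN_le) auto
  then have "real (card (\<Union>t<T. \<Union>u\<in>V - {x}. F t u)) \<le> (\<Sum>t<T. real (\<Sum>u\<in>V - {x}. card (F t u)))"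
    by (metis of_nat_le_iff of_nat_sum)
  also have "\<dots> \<le> (\<Sum>t<T. round_cost V w M t * w x)"
    by (intro sum_mono assms(2))
  finally show ?thesis
    unfolding total_cost_def by (simp add: sum_distrib_right)
qed

lemma card_received_le_total_cost:
  assumes "finite V" "x \<in> V" "w x > 0"
  shows "real (card (received V M T x)) \<le> total_cost V w M T * w x"
  unfolding received_def using assms load_le_round_cost(1)[of V x w, OF assms]
  by (intro card_rounds_le_total_cost) (auto simp: load_in_def)

lemma card_sent_le_total_cost:
  assumes "finite V" "x \<in> V" "w x > 0"
  shows "real (card (sent V M T x)) \<le> total_cost V w M T * w x"
  unfolding sent_def using assms load_le_round_cost(2)[of V x w, OF assms]
  by (intro card_rounds_le_total_cost) (auto simp: load_out_def)

lemma total_cost_nonneg: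
  assumes "finite V" "x \<in> V" "w x > 0"
  shows "total_cost V w M T \<ge> 0"
  unfolding total_cost_def
proof (rule sum_nonneg)
  fix t
  have "0 \<le> real (load_in V M t x) / w x" using assms(3) by simp
  also have "\<dots> \<le> round_cost V w M t"
    unfolding round_cost_def using assms(1,2) by (intro Max_ge) auto
  finally show "0 \<le> round_cost V w M t" .
qed

lemma volV_le:
  assumes "C \<ge> 0" "real (card R') * real (card S') \<le> (\<Sum>v\<in>U. min (C * w v) (real (card R')) * C * w v)"
  shows "volV R' S' U w \<le> C"
  unfolding volV_def using assms by (intro cInf_lower bdd_belowI[of _ 0]) auto

lemma volV_le_scaled:
  fixes k :: real
  assumes "k \<ge> 1" "C \<ge> 0" "\<And>v. v \<in> U \<Longrightarrow> w v \<ge> 0"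
    and "real (card R') * real (card S') \<le> k * (\<Sum>v\<in>U. min (C * w v) (real (card R')) * C * w v)"
  shows "volV R' S' U w \<le> k * C"
proof (rule volV_le)
  have "k * (min (C * w v) (real (card R')) * C * w v)
      \<le> min (k * C * w v) (real (card R')) * (k * C) * w v" if "v \<in> U" for v
  proof -
    have "C * w v \<ge> 0" using assms(2,3) that by simp
    then have kCw: "C * w v \<le> k * C * w v"
      using assms(1) mult_right_mono[of 1 k "C * w v"] by (simp add: mult.assoc)
    have "k * (min (C * w v) (real (card R')) * C * w v) = min (C * w v) (real (card R')) * (k * C * w v)"
      by (simp add: algebra_simps)
    also have "\<dots> \<le> min (k * C * w v) (real (card R')) * (k * C * w v)"
      using min.mono[OF kCw order_refl] kCw \<open>C * w v \<ge> 0\<close> by (simp add: mult_right_mono)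
    finally show ?thesis by (simp add: mult.assoc)
  qed
  then show "real (card R') * real (card S') \<le> (\<Sum>v\<in>U. min (k * C * w v) (real (card R')) * (k * C) * w v)"
    using assms(4) by (simp add: sum_distrib_left) (meson order_trans sum_mono)
qed (use assms(1,2) in simp)

locale star_execution =
  fixes V :: "'v set" and w :: "'v \<Rightarrow> real" and R :: "'r set" and S :: "'s set"
    and Rv :: "'v \<Rightarrow> 'r set" and Sv :: "'v \<Rightarrow> 's set"
    and M :: "nat \<Rightarrow> 'v \<Rightarrow> 'v \<Rightarrow> ('r + 's) set" and T :: nat
  assumes star: "star_instance V w R S Rv Sv"
    and valid: "valid_exec V (init_data Rv Sv) M T"
    and computes: "computes_product V (init_data Rv Sv) M T R S"
begin

abbreviation holds :: "'v \<Rightarrow> ('r + 's) set" where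
  "holds x \<equiv> know V (init_data Rv Sv) M T x"

abbreviation cost :: real where
  "cost \<equiv> total_cost V w M T"

lemma finite_V: "finite V"
  and V_nonempty: "V \<noteq> {}"
  and w_pos: "x \<in> V \<Longrightarrow> w x > 0"
  and finite_R: "finite R"
  and finite_S: "finite S"
  and Rv_subset: "x \<in> V \<Longrightarrow> Rv x \<subseteq> R"
  and Sv_subset: "x \<in> V \<Longrightarrow> Sv x \<subseteq> S"
  using star unfolding star_instance_def by auto

lemma init_data_disjoint:
  "x \<in> V \<Longrightarrow> y \<in> V \<Longrightarrow> x \<noteq> y \<Longrightarrow> init_data Rv Sv x \<inter> init_data Rv Sv y = {}"
  using star unfolding star_instance_def init_data_def by blast

lemma holds_eq: "holds x = init_data Rv Sv x \<union> received V M T x"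
  by (rule know_eq_received)

lemma finite_holds: "x \<in> V \<Longrightarrow> finite (holds x)"
proof (rule finite_know[OF valid finite_V])
  fix v assume "v \<in> V"
  then have "finite (Rv v)" "finite (Sv v)"
    using finite_subset[OF Rv_subset finite_R] finite_subset[OF Sv_subset finite_S] by simp_all
  then show "finite (init_data Rv Sv v)" unfolding init_data_def by simp
qed auto

lemma finite_received: "x \<in> V \<Longrightarrow> finite (received V M T x)"
  using finite_holds holds_eq by simp

lemma card_received_le_cost: "x \<in> V \<Longrightarrow> real (card (received V M T x)) \<le> cost * w x"
  by (intro card_received_le_total_cost finite_V w_pos)

lemma card_sent_le_cost: "x \<in> V \<Longrightarrow> real (card (sent V M T x)) \<le> cost * w x"
  by (intro card_sent_le_total_cost finite_V w_pos)

lemma cost_nonneg: "cost \<ge> 0"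
proof -
  obtain x where "x \<in> V" using V_nonempty by blast
  then show ?thesis using total_cost_nonneg[OF finite_V] w_pos by blast
qed

lemma pairs_meet:
  assumes "r \<in> R" "s \<in> S"
  obtains y where "y \<in> V" "Inl r \<in> holds y" "Inr s \<in> holds y"
proof -
  have "\<exists>y\<in>V. \<exists>t\<le>T. Inl r \<in> know V (init_data Rv Sv) M t y \<and> Inr s \<in> know V (init_data Rv Sv) M t y"
    using computes assms unfolding computes_product_def by simp
  then obtain y t where y: "y \<in> V" "t \<le> T"
    and "Inl r \<in> know V (init_data Rv Sv) M t y" "Inr s \<in> know V (init_data Rv Sv) M t y"
    by blast
  then have "Inl r \<in> holds y" "Inr s \<in> holds y"
    using know_mono[OF \<open>t \<le> T\<close>, of V "init_data Rv Sv" M y] by auto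
  with y that show ?thesis by simp
qed

lemma unsent_meets_only_at_home:
  assumes "x \<in> V" "e \<in> init_data Rv Sv x" "e \<notin> sent V M T x" "y \<in> V" "e \<in> holds y"
  shows "y = x"
proof (rule ccontr)
  assume "y \<noteq> x"
  have "e \<notin> init_data Rv Sv z" if "z \<in> V - {x}" for z
    using init_data_disjoint[of x z] assms(1,2) that by blast
  then have "e \<in> sent V M T x"
    using know_imp_sent[OF valid _ order_refl assms(4) \<open>y \<noteq> x\<close> assms(5)] by blast
  with assms(3) show False ..
qed

lemma finite_sent: "x \<in> V \<Longrightarrow> finite (sent V M T x)"
  using finite_holds sent_subset_know[OF valid] finite_subset by blast

lemma card_vimage_holds_le:
  assumes "x \<in> V"
  shows "card (Inl -` holds x) \<le> card (Rv x) + card (received V M T x)"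
    and "card (Inr -` holds x) \<le> card (Sv x) + card (received V M T x)"
proof -
  have "Inl -` holds x = Rv x \<union> Inl -` received V M T x"
    and "Inr -` holds x = Sv x \<union> Inr -` received V M T x"
    unfolding holds_eq init_data_def by auto
  moreover have "card (Inl -` received V M T x) \<le> card (received V M T x)"
    and "card (Inr -` received V M T x) \<le> card (received V M T x)"
    using finite_received[OF assms(1)] by (simp_all add: card_vimage_inj_le)
  ultimately show "card (Inl -` holds x) \<le> card (Rv x) + card (received V M T x)"
    and "card (Inr -` holds x) \<le> card (Sv x) + card (received V M T x)"
    by (metis card_Un_le add_left_mono order_trans)+
qed

text \<open>If \<open>x\<close> keeps one of its own tuples, all partners of that tuple must come to \<open>x\<close>.\<close>

lemma card_S_le_if_cost_less_card_Rv:
  assumes "x \<in> V" "cost * w x < real (card (Rv x))"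
  shows "real (card S) \<le> real (card (Sv x)) + cost * w x"
proof -
  have "card (sent V M T x) < card (Rv x)"
    using card_sent_le_cost[OF assms(1)] assms(2) by linarith
  then obtain r where r: "r \<in> Rv x" "Inl r \<notin> sent V M T x"
    using ex_not_mapped_into[of Inl] finite_sent[OF assms(1)] by (metis inj_Inl)
  have "S \<subseteq> Inr -` holds x"
  proof
    fix s assume "s \<in> S"
    then obtain y where y: "y \<in> V" "Inl r \<in> holds y" "Inr s \<in> holds y"
      using pairs_meet[of r s] r(1) Rv_subset[OF assms(1)] by blast
    have "y = x"
      using unsent_meets_only_at_home[OF assms(1) _ r(2) y(1,2)] r(1) by (simp add: init_data_def)
    with y(3) show "s \<in> Inr -` holds x" by simp
  qed
  then have "card S \<le> card (Sv x) + card (received V M T x)"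
    using card_vimage_holds_le(2)[OF assms(1)] finite_holds[OF assms(1)]
    by (meson card_mono finite_vimageI inj_Inr order_trans)
  then show ?thesis
    using card_received_le_cost[OF assms(1)] by linarith
qed

lemma card_R_le_if_cost_less_card_Sv:
  assumes "x \<in> V" "cost * w x < real (card (Sv x))"
  shows "real (card R) \<le> real (card (Rv x)) + cost * w x"
proof -
  have "card (sent V M T x) < card (Sv x)"
    using card_sent_le_cost[OF assms(1)] assms(2) by linarith
  then obtain s where s: "s \<in> Sv x" "Inr s \<notin> sent V M T x"
    using ex_not_mapped_into[of Inr] finite_sent[OF assms(1)] by (metis inj_Inr)
  have "R \<subseteq> Inl -` holds x"
  proof
    fix r assume "r \<in> R"
    then obtain y where y: "y \<in> V" "Inl r \<in> holds y" "Inr s \<in> holds y"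
      using pairs_meet[of r s] s(1) Sv_subset[OF assms(1)] by blast
    have "y = x"
      using unsent_meets_only_at_home[OF assms(1) _ s(2) y(1,3)] s(1) by (simp add: init_data_def)
    with y(2) show "r \<in> Inl -` holds x" by simp
  qed
  then have "card R \<le> card (Rv x) + card (received V M T x)"
    using card_vimage_holds_le(1)[OF assms(1)] finite_holds[OF assms(1)]
    by (meson card_mono finite_vimageI inj_Inl order_trans)
  then show ?thesis
    using card_received_le_cost[OF assms(1)] by linarith
qed

lemma small_node_fragments_le_cost:
  assumes "x \<in> V" "card (Rv x) + card (Sv x) < card R" "card R < card S"
  shows "real (card (Rv x)) \<le> cost * w x" "real (card (Sv x)) \<le> cost * w x"
proof -
  have sizes: "real (card (Rv x)) + real (card (Sv x)) < real (card R)" "real (card R) < real (card S)"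
    using assms(2,3) by linarith+
  show "real (card (Rv x)) \<le> cost * w x"
  proof (rule ccontr)
    assume "\<not> ?thesis"
    then have "real (card S) \<le> real (card (Sv x)) + cost * w x"
      by (intro card_S_le_if_cost_less_card_Rv[OF assms(1)]) simp
    with sizes \<open>\<not> ?thesis\<close> show False by linarith
  qed
  show "real (card (Sv x)) \<le> cost * w x"
  proof (rule ccontr)
    assume "\<not> ?thesis"
    then have "real (card R) \<le> real (card (Rv x)) + cost * w x"
      by (intro card_R_le_if_cost_less_card_Sv[OF assms(1)]) simp
    with sizes \<open>\<not> ?thesis\<close> show False by linarith
  qed
qed

lemma card_holds_small_node:
  assumes "x \<in> V" "card (Rv x) + card (Sv x) < card R" "card R < card S"
  shows "real (card (holds x)) \<le> 3 * (cost * w x)"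
proof -
  have "card (holds x) \<le> card (Rv x) + card (Sv x) + card (received V M T x)"
    unfolding holds_eq using card_init_data_le[of Rv Sv x]
    by (meson card_Un_le add_right_mono order_trans)
  then show ?thesis
    using small_node_fragments_le_cost[OF assms] card_received_le_cost[OF assms(1)] by linarith
qed

lemma card_pairs_at_small_node_le:
  assumes "x \<in> V" "card (Rv x) + card (Sv x) < card R" "card R < card S"
  shows "real (card (R \<inter> Inl -` holds x)) * real (card (S \<inter> Inr -` holds x))
    \<le> 9 * (min (cost * w x) (real (card R)) * cost * w x)"
proof -
  define m where "m = cost * w x"
  have "m \<ge> 0" unfolding m_def using cost_nonneg w_pos[OF assms(1)] by simp
  have "card (R \<inter> Inl -` holds x) + card (S \<inter> Inr -` holds x) \<le> card (Inl -` holds x) + card (Inr -` holds x)"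
    using finite_holds[OF assms(1)] by (intro add_mono card_mono finite_vimageI) auto
  also have "\<dots> = card (holds x)"
    by (rule card_vimage_Inl_plus_Inr[OF finite_holds[OF assms(1)]])
  finally have "real (card (R \<inter> Inl -` holds x)) + real (card (S \<inter> Inr -` holds x)) \<le> 3 * m"
    using card_holds_small_node[OF assms] unfolding m_def by linarith
  moreover have "card (R \<inter> Inl -` holds x) \<le> card R"
    using finite_R by (simp add: card_mono)
  ultimately have "real (card (R \<inter> Inl -` holds x)) \<le> 3 * min m (real (card R))"
    and "real (card (S \<inter> Inr -` holds x)) \<le> 3 * m"
    by (auto simp: min_def)
  then have "real (card (R \<inter> Inl -` holds x)) * real (card (S \<inter> Inr -` holds x))
      \<le> (3 * min m (real (card R))) * (3 * m)"
    using \<open>m \<ge> 0\<close> by (intro mult_mono) auto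
  then show ?thesis unfolding m_def by (simp add: algebra_simps)
qed

lemma R_times_fragments_covered:
  assumes "U \<subseteq> V"
  shows "R \<times> (\<Union>u\<in>U. Sv u) \<subseteq> (\<Union>x\<in>U. (R \<inter> Inl -` holds x) \<times> (S \<inter> Inr -` holds x))
    \<union> R \<times> (\<Union>x\<in>V - U. Inr -` received V M T x)"
proof
  fix p assume "p \<in> R \<times> (\<Union>u\<in>U. Sv u)"
  then obtain r s u where p: "p = (r, s)" "r \<in> R" "u \<in> U" "s \<in> Sv u" by auto
  have "u \<in> V" "s \<in> S" using assms p(3,4) Sv_subset by auto
  obtain y where y: "y \<in> V" "Inl r \<in> holds y" "Inr s \<in> holds y"
    using pairs_meet[of r s] p(2) \<open>s \<in> S\<close> by blast
  show "p \<in> (\<Union>x\<in>U. (R \<inter> Inl -` holds x) \<times> (S \<inter> Inr -` holds x)) \<union> R \<times> (\<Union>x\<in>V - U. Inr -` received V M T x)"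
  proof (cases "y \<in> U")
    case True
    then show ?thesis using y p \<open>s \<in> S\<close> by auto
  next
    case False
    then have "Inr s \<notin> init_data Rv Sv y"
      using init_data_disjoint[OF \<open>u \<in> V\<close> y(1)] p(3,4) by (auto simp: init_data_def)
    then have "Inr s \<in> received V M T y" using y(3) holds_eq by auto
    then show ?thesis using False y(1) p by auto
  qed
qed

lemma card_received_from_S_le:
  assumes "W \<subseteq> V"
  shows "real (card (\<Union>x\<in>W. Inr -` received V M T x)) \<le> cost * (\<Sum>x\<in>W. w x)"
proof -
  have "finite W" using finite_subset[OF assms finite_V] .
  then have "card (\<Union>x\<in>W. Inr -` received V M T x) \<le> (\<Sum>x\<in>W. card (Inr -` received V M T x))"
    by (rule card_UN_le)
  also have "\<dots> \<le> (\<Sum>x\<in>W. card (received V M T x))"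
    using assms by (intro sum_mono card_vimage_inj_le) (auto simp: finite_received)
  finally have "real (card (\<Union>x\<in>W. Inr -` received V M T x)) \<le> (\<Sum>x\<in>W. real (card (received V M T x)))"
    by (metis of_nat_le_iff of_nat_sum)
  also have "\<dots> \<le> (\<Sum>x\<in>W. cost * w x)"
    using assms by (intro sum_mono card_received_le_cost) auto
  finally show ?thesis by (simp add: sum_distrib_left)
qed

lemma card_R_times_fragments_le:
  assumes "U \<subseteq> V"
  shows "card R * card (\<Union>u\<in>U. Sv u)
    \<le> (\<Sum>x\<in>U. card (R \<inter> Inl -` holds x) * card (S \<inter> Inr -` holds x))
      + card R * card (\<Union>x\<in>V - U. Inr -` received V M T x)"
proof -
  define A where "A x = (R \<inter> Inl -` holds x) \<times> (S \<inter> Inr -` holds x)" for x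
  define Q where "Q = (\<Union>x\<in>V - U. Inr -` received V M T x)"
  have "finite U" using finite_subset[OF assms finite_V] .
  have "finite Q"
    unfolding Q_def using finite_V finite_received by (simp add: finite_vimageI)
  have "card R * card (\<Union>u\<in>U. Sv u) = card (R \<times> (\<Union>u\<in>U. Sv u))"
    by (simp add: card_cartesian_product)
  also have "\<dots> \<le> card ((\<Union>x\<in>U. A x) \<union> R \<times> Q)"
  proof (rule card_mono)
    show "finite ((\<Union>x\<in>U. A x) \<union> R \<times> Q)"
      using \<open>finite U\<close> \<open>finite Q\<close> finite_R finite_S unfolding A_def by simp
    show "R \<times> (\<Union>u\<in>U. Sv u) \<subseteq> (\<Union>x\<in>U. A x) \<union> R \<times> Q"
      using R_times_fragments_covered[OF assms] unfolding A_def Q_def .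
  qed
  also have "\<dots> \<le> (\<Sum>x\<in>U. card (A x)) + card R * card Q"
    using card_UN_le[OF \<open>finite U\<close>, of A] card_Un_le[of "\<Union>x\<in>U. A x" "R \<times> Q"]
    by (simp add: card_cartesian_product)
  finally show ?thesis
    unfolding A_def Q_def card_cartesian_product .
qed

lemma card_R_times_small_fragments_le:
  assumes "U \<subseteq> V" "\<And>x. x \<in> U \<Longrightarrow> card (Rv x) + card (Sv x) < card R" "card R < card S"
  shows "real (card R) * real (card (\<Union>u\<in>U. Sv u))
    \<le> 9 * (\<Sum>x\<in>U. min (cost * w x) (real (card R)) * cost * w x) + real (card R) * (cost * (\<Sum>x\<in>V - U. w x))"
proof -
  from of_nat_mono[where 'a = real, OF card_R_times_fragments_le[OF assms(1)]]
  have "real (card R) * real (card (\<Union>u\<in>U. Sv u))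
      \<le> (\<Sum>x\<in>U. real (card (R \<inter> Inl -` holds x)) * real (card (S \<inter> Inr -` holds x)))
        + real (card R) * real (card (\<Union>x\<in>V - U. Inr -` received V M T x))"
    by (simp only: of_nat_add of_nat_mult of_nat_sum)
  also have "\<dots> \<le> 9 * (\<Sum>x\<in>U. min (cost * w x) (real (card R)) * cost * w x) + real (card R) * (cost * (\<Sum>x\<in>V - U. w x))"
  proof (rule add_mono)
    show "(\<Sum>x\<in>U. real (card (R \<inter> Inl -` holds x)) * real (card (S \<inter> Inr -` holds x)))
      \<le> 9 * (\<Sum>x\<in>U. min (cost * w x) (real (card R)) * cost * w x)"
      unfolding sum_distrib_left
    proof (rule sum_mono)
      fix x assume "x \<in> U"
      then show "real (card (R \<inter> Inl -` holds x)) * real (card (S \<inter> Inr -` holds x))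
        \<le> 9 * (min (cost * w x) (real (card R)) * cost * w x)"
        using assms(1) by (intro card_pairs_at_small_node_le assms(2,3)) auto
    qed
    show "real (card R) * real (card (\<Union>x\<in>V - U. Inr -` received V M T x)) \<le> real (card R) * (cost * (\<Sum>x\<in>V - U. w x))"
      using card_received_from_S_le[of "V - U"] by (intro mult_left_mono) auto
  qed
  finally show ?thesis .
qed

lemma card_UN_Sv: "U \<subseteq> V \<Longrightarrow> card (\<Union>u\<in>U. Sv u) = (\<Sum>u\<in>U. card (Sv u))"
  using star finite_subset[OF _ finite_V] finite_subset[OF Sv_subset finite_S]
  unfolding star_instance_def by (intro card_UN_disjoint) blast+

lemma star_bound_le:
  assumes "card R < card S" "\<And>v. v \<in> V \<Longrightarrow> 2 * (card (Rv v) + card (Sv v)) \<le> card R + card S"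
  shows "star_bound V w R S Rv Sv \<le> 18 * cost"
proof -
  define Va where "Va = {v \<in> V. min (card (Rv v) + card (Sv v)) (card R + card S - (card (Rv v) + card (Sv v))) < card R}"
  define Sa where "Sa = (\<Union>u\<in>Va. Sv u)"
  define X where "X = (\<Sum>x\<in>Va. min (cost * w x) (real (card R)) * cost * w x)"
  define W where "W = (\<Sum>x\<in>V - Va. w x)"
  have "Va \<subseteq> V" unfolding Va_def by blast
  have small: "card (Rv x) + card (Sv x) < card R" if "x \<in> Va" for x
    using that assms(2)[of x] unfolding Va_def by auto
  have covered: "real (card R) * real (card Sa) \<le> 9 * X + real (card R) * (cost * W)"
    unfolding Sa_def X_def W_def using \<open>Va \<subseteq> V\<close> small assms(1)
    by (rule card_R_times_small_fragments_le)
  have bound_by_vol: "star_bound V w R S Rv Sv \<le> volV R Sa Va w"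
    and bound_by_rest: "V - Va \<noteq> {} \<Longrightarrow> star_bound V w R S Rv Sv \<le> (\<Sum>u\<in>Va. real (card (Sv u))) / (2 * W)"
    unfolding star_bound_def Let_def Va_def[symmetric] Sa_def[symmetric] W_def[symmetric]
    by (simp_all add: min_le_iff_disj)
  show ?thesis
  proof (cases "real (card R) * real (card Sa) \<le> 18 * X")
    case True
    then have "volV R Sa Va w \<le> 18 * cost"
      unfolding X_def using cost_nonneg w_pos \<open>Va \<subseteq> V\<close> by (intro volV_le_scaled) (auto intro: less_imp_le)
    with bound_by_vol show ?thesis by linarith
  next
    case False
    with covered have "real (card R) * real (card Sa) < real (card R) * (2 * cost * W)"
      by (simp add: algebra_simps)
    then have "real (card Sa) < 2 * cost * W" and "W \<noteq> 0"
      by (auto simp: mult_less_cancel_left)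
    then have "V - Va \<noteq> {}" and "W > 0"
      unfolding W_def using w_pos \<open>Va \<subseteq> V\<close> finite_V by (auto intro: sum_pos)
    have "(\<Sum>u\<in>Va. real (card (Sv u))) / (2 * W) = real (card Sa) / (2 * W)"
      unfolding Sa_def using card_UN_Sv[OF \<open>Va \<subseteq> V\<close>] by simp
    also have "\<dots> \<le> cost"
      using \<open>real (card Sa) < 2 * cost * W\<close> \<open>W > 0\<close> by (simp add: divide_le_eq algebra_simps)
    finally show ?thesis
      using bound_by_rest[OF \<open>V - Va \<noteq> {}\<close>] cost_nonneg by linarith
  qed
qed

end

theorem theorem9:
  "\<exists>c>0. \<forall>(V::nat set) (w::nat \<Rightarrow> real) (R::nat set) (S::nat set) Rv Sv
          (M::nat \<Rightarrow> nat \<Rightarrow> nat \<Rightarrow> (nat + nat) set) (T::nat).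
      star_instance V w R S Rv Sv \<and> card R < card S \<and>
      (\<forall>v\<in>V. 2 * (card (Rv v) + card (Sv v)) \<le> card R + card S) \<and>
      valid_exec V (init_data Rv Sv) M T \<and>
      computes_product V (init_data Rv Sv) M T R S
      \<longrightarrow> total_cost V w M T \<ge> c * star_bound V w R S Rv Sv"
proof (intro exI[of _ "1/18"] conjI allI impI)
  fix V :: "nat set" and w :: "nat \<Rightarrow> real" and R S :: "nat set" and Rv Sv
    and M :: "nat \<Rightarrow> nat \<Rightarrow> nat \<Rightarrow> (nat + nat) set" and T :: nat
  assume H: "star_instance V w R S Rv Sv \<and> card R < card S \<and>
      (\<forall>v\<in>V. 2 * (card (Rv v) + card (Sv v)) \<le> card R + card S) \<and>
      valid_exec V (init_data Rv Sv) M T \<and>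
      computes_product V (init_data Rv Sv) M T R S"
  then interpret star_execution V w R S Rv Sv M T
    by unfold_locales simp_all
  have "star_bound V w R S Rv Sv \<le> 18 * total_cost V w M T"
    using H by (intro star_bound_le) simp_all
  then show "total_cost V w M T \<ge> 1/18 * star_bound V w R S Rv Sv" by simp
qed simp

end
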